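(* The Fugue algorithm (described in the context) satisfies the strong list specification: for every execution of Fugue there is a total order $\prec$ on all list elements inserted anywhere in the execution such that (a) at any time, the list returned by a replica's $\mathsf{values}()$ consists of exactly the elements whose insert operation that replica has received, minus those whose delete operation it has received, arranged in the order $\prec$; and (b) if, just before a replica invokes $\mathsf{insert}(i,x)$, its $\mathsf{values}()$ are the elements $[a_0,\dots,a_{n-1}]$, then the newly inserted element $e$ satisfies $a_0,\dots,a_{i-1}\prec e\prec a_i,\dots,a_{n-1}$.
   Context: Replicated list model: a list is replicated over a set of replicas, each with a unique replica ID from a totally ordered set. A replica may invoke $\mathsf{insert}(i,x)$ (insert a new element with value $x$ at index $i$ of its current list, shifting later elements) or $\mathsf{delete}(i)$ (delete the element at index $i$). Each insertion creates a new list element (a unique instance of a value). Each operation generates a message that is disseminated by causal broadcast: every message is eventually delivered to every replica, a message is delivered at a replica only after all messages that had been delivered at its sender before it was sent, and the sender delivers its own message immediately. Replicas update their state only upon delivery. Fugue: each replica's state is a tree with a root node; each non-root node has a unique ID, a value (or the tombstone marker $\bot$), a parent, and a side ($L$ = left child or $R$ = right child). A node may have several left children and several right children. IDs are pairs $(\text{replicaID},\text{counter})$, compared lexicographically; each replica keeps a counter starting at 0. The traversal of a node $v$ is: traverse each left child of $v$ in increasing ID order, then visit $v$, then traverse each right child of $v$ in increasing ID order; the traversal of the tree starts at the root. The "traversal including tombstones" lists all non-root nodes in this order; $\mathsf{values}()$ returns the values of the nodes in this order whose value is not $\bot$ (the visible elements). $\mathsf{insert}(i,x)$ at a replica: create ID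 $(\text{replicaID},\text{counter})$ and increment the counter; let leftOrigin be the node of the $(i-1)$-th visible element, or the root if $i=0$; let rightOrigin be the node immediately after leftOrigin in the traversal including tombstones. If leftOrigin has no right child, the new node (with value $x$) is a right child of leftOrigin; otherwise it is a left child of rightOrigin. Broadcast the new node's (ID, value, parent ID, side); on delivery every replica adds it to its tree as the specified child of the specified parent. $\mathsf{delete}(i)$: broadcast the ID of the node of the $i$-th visible element; on delivery, each replica sets that node's value to $\bot$ (the node stays in the tree). *)

theory Defs
  imports Main "HOL-Library.Product_Lexorder"
begin

datatype side = L | R

type_synonym 'r nid = "'r \<times> nat"

text \<open>A node: (value or tombstone None, parent (None = root), side)\<close>
type_synonym ('r,'v) node = "'v option \<times> 'r nid option \<times> side"

record ('r,'v) rstate =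
  tree :: "'r nid \<Rightarrow> ('r,'v) node option"
  ctr :: nat

datatype ('r,'v) msg = InsMsg "'r nid" 'v "'r nid option" side | DelMsg "'r nid"

datatype 'v operation = Insert nat 'v | Delete nat

datatype ('r,'v) event = Invoke 'r "'v operation" | Deliver 'r nat
  \<comment> \<open>Deliver r j: replica r receives the j-th broadcast message (numbered in order of sending)\<close>

definition kids :: "('r::linorder,'v) rstate \<Rightarrow> 'r nid option \<Rightarrow> side \<Rightarrow> 'r nid list" where
  "kids st p s = sorted_list_of_set
     {c. \<exists>n. tree st c = Some n \<and> fst (snd n) = p \<and> snd (snd n) = s}"

fun trav :: "nat \<Rightarrow> ('r::linorder,'v) rstate \<Rightarrow> 'r nid option \<Rightarrow> 'r nid list" where
  "trav 0 st v = []"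
| "trav (Suc n) st v =
     concat (map (\<lambda>c. trav n st (Some c)) (kids st v L))
     @ (case v of None \<Rightarrow> [] | Some c \<Rightarrow> [c])
     @ concat (map (\<lambda>c. trav n st (Some c)) (kids st v R))"

text \<open>Traversal including tombstones (fuel = number of nodes + 1 bounds the tree depth).\<close>
definition traversal :: "('r::linorder,'v) rstate \<Rightarrow> 'r nid list" where
  "traversal st = trav (card (dom (tree st)) + 1) st None"

definition visible :: "('r,'v) rstate \<Rightarrow> 'r nid \<Rightarrow> bool" where
  "visible st c = (\<exists>x p s. tree st c = Some (Some x, p, s))"

definition elems :: "('r::linorder,'v) rstate \<Rightarrow> 'r nid list" where
  "elems st = filter (visible st) (traversal st)"

definition list_values :: "('r::linorder,'v) rstate \<Rightarrow> 'v list" where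
  "list_values st = map (\<lambda>c. the (fst (the (tree st c)))) (elems st)"

definition new_id :: "('r,'v) rstate \<Rightarrow> 'r \<Rightarrow> 'r nid" where
  "new_id st r = (r, ctr st)"

definition gen_insert :: "('r::linorder,'v) rstate \<Rightarrow> 'r \<Rightarrow> nat \<Rightarrow> 'v \<Rightarrow> ('r,'v) msg" where
  "gen_insert st r i x =
     (let lo = (if i = 0 then None else Some (elems st ! (i - 1)));
          T = traversal st;
          ro = (case lo of None \<Rightarrow> hd T | Some a \<Rightarrow> hd (tl (dropWhile (\<lambda>c. c \<noteq> a) T)))
      in if kids st lo R = [] then InsMsg (new_id st r) x lo R
         else InsMsg (new_id st r) x (Some ro) L)"

definition gen_delete :: "('r::linorder,'v) rstate \<Rightarrow> nat \<Rightarrow> ('r,'v) msg" where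
  "gen_delete st i = DelMsg (elems st ! i)"

fun apply_msg :: "('r,'v) msg \<Rightarrow> ('r,'v) rstate \<Rightarrow> ('r,'v) rstate" where
  "apply_msg (InsMsg c x p s) st = st\<lparr>tree := (tree st)(c \<mapsto> (Some x, p, s))\<rparr>"
| "apply_msg (DelMsg c) st =
     (case tree st c of None \<Rightarrow> st
      | Some (v, p, s) \<Rightarrow> st\<lparr>tree := (tree st)(c \<mapsto> (None, p, s))\<rparr>)"

text \<open>Global configuration: replica states, the broadcast log (sender, message,
  set of message numbers delivered at the sender before sending = causal dependencies),
  and the set of message numbers delivered at each replica.\<close>
record ('r,'v) config =
  reps :: "'r \<Rightarrow> ('r,'v) rstate"
  msgs :: "('r \<times> ('r,'v) msg \<times> nat set) list"
  dlv :: "'r \<Rightarrow> nat set"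

definition init :: "('r,'v) config" where
  "init = \<lparr>reps = (\<lambda>_. \<lparr>tree = Map.empty, ctr = 0\<rparr>), msgs = [], dlv = (\<lambda>_. {})\<rparr>"

definition broadcast :: "('r,'v) config \<Rightarrow> 'r \<Rightarrow> ('r,'v) rstate \<Rightarrow> ('r,'v) msg \<Rightarrow> ('r,'v) config" where
  "broadcast c r st m =
     c\<lparr>reps := (reps c)(r := apply_msg m st),
       msgs := msgs c @ [(r, m, dlv c r)],
       dlv := (dlv c)(r := insert (length (msgs c)) (dlv c r))\<rparr>"

fun step :: "('r::linorder,'v) config \<Rightarrow> ('r,'v) event \<Rightarrow> ('r,'v) config option" where
  "step c (Invoke r (Insert i x)) =
     (let st = reps c r in
      if i \<le> length (elems st)
      then Some (broadcast c r (st\<lparr>ctr := Suc (ctr st)\<rparr>) (gen_insert st r i x))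
      else None)"
| "step c (Invoke r (Delete i)) =
     (let st = reps c r in
      if i < length (elems st)
      then Some (broadcast c r st (gen_delete st i))
      else None)"
| "step c (Deliver r j) =
     (if j < length (msgs c) \<and> j \<notin> dlv c r \<and> snd (snd (msgs c ! j)) \<subseteq> dlv c r
      then Some (c\<lparr>reps := (reps c)(r := apply_msg (fst (snd (msgs c ! j))) (reps c r)),
                   dlv := (dlv c)(r := insert j (dlv c r))\<rparr>)
      else None)"

definition run :: "('r::linorder,'v) event list \<Rightarrow> ('r,'v) config option" where
  "run es = fold (\<lambda>e co. Option.bind co (\<lambda>c. step c e)) es (Some init)"

definition valid_exec :: "('r::linorder,'v) event list \<Rightarrow> bool" where
  "valid_exec es = (run es \<noteq> None)"

definition state_at :: "('r::linorder,'v) event list \<Rightarrow> nat \<Rightarrow> ('r,'v) config" where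
  "state_at es k = the (run (take k es))"

definition inserted :: "('r,'v) config \<Rightarrow> 'r nid set" where
  "inserted c = {e. \<exists>j < length (msgs c). \<exists>x p s. fst (snd (msgs c ! j)) = InsMsg e x p s}"

definition received_ins :: "('r,'v) config \<Rightarrow> 'r \<Rightarrow> 'r nid set" where
  "received_ins c r = {e. \<exists>j \<in> dlv c r. j < length (msgs c) \<and>
                          (\<exists>x p s. fst (snd (msgs c ! j)) = InsMsg e x p s)}"

definition received_del :: "('r,'v) config \<Rightarrow> 'r \<Rightarrow> 'r nid set" where
  "received_del c r = {e. \<exists>j \<in> dlv c r. j < length (msgs c) \<and> fst (snd (msgs c ! j)) = DelMsg e}"

end

theory Submission
  imports Defs
begin

(* Let the key of a node be its path from the root, each step recording the side taken
   (L as 0, R as 2) and the child's ID, followed by (1, node).  The traversal of a Fugue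
   tree lists its nodes in lexicographic key order, and keys do not change when a tree
   grows.  Causal delivery makes every replica tree the restriction of one global tree,
   built from all insertions ever broadcast, to the insertions the replica has received;
   so the key order of the final global tree orders every replica's list.  An inserted
   node becomes the right child of leftOrigin (when leftOrigin has no right child) or the
   left child of rightOrigin, the successor of leftOrigin in the traversal; either way
   its key falls strictly between theirs, hence between the (i-1)-th and i-th visible
   elements. *)

lemma map_le_SomeD: "f \<subseteq>\<^sub>m g \<Longrightarrow> f x = Some y \<Longrightarrow> g x = Some y"
  by (metis domI map_le_def)

lemma restrict_map_le_eq: "g \<subseteq>\<^sub>m g' \<Longrightarrow> S \<subseteq> dom g \<Longrightarrow> g' |` S = g |` S"
  unfolding map_le_def restrict_map_def fun_eq_iff by (metis subsetD)

lemma snoc_eq_Cons_split: "xs @ [z] = us @ y # vs \<Longrightarrow> vs \<noteq> [] \<Longrightarrow> xs = us @ y # butlast vs"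
  by (cases vs rule: rev_cases) auto

lemma sorted_wrt_concat_blocks:
  fixes f :: "'b \<Rightarrow> 'c::linorder list"
  assumes "sorted_wrt (<) ls"
    and "\<And>l. l \<in> set ls \<Longrightarrow> sorted_wrt (\<lambda>a b. ord_class.lexordp (f a) (f b)) (B l)"
    and "\<And>l a. l \<in> set ls \<Longrightarrow> a \<in> set (B l) \<Longrightarrow> \<exists>Z. f a = P @ l # Z"
  shows "sorted_wrt (\<lambda>a b. ord_class.lexordp (f a) (f b)) (concat (map B ls))"
  using assms
proof (induction ls)
  case (Cons l ls)
  have "ord_class.lexordp (f a) (f b)" if "a \<in> set (B l)" "l' \<in> set ls" "b \<in> set (B l')" for a b l'
  proof -
    have "\<exists>Z. f a = P @ l # Z" "\<exists>Z. f b = P @ l' # Z"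
      using Cons.prems(3) that by auto
    then obtain Z Z' where "f a = P @ l # Z" "f b = P @ l' # Z'"
      by blast
    moreover have "l < l'"
      using Cons.prems(1) that(2) by simp
    ultimately show ?thesis by (simp add: lexordp_append_left_rightI)
  qed
  with Cons show ?case by (auto simp: sorted_wrt_append)
qed simp

lemma sorted_wrt_successor:
  assumes sorted: "sorted_wrt r xs" and "transp r" "irreflp r"
    and "a \<in> set xs" "c \<in> set xs" "r a c"
  defines "b \<equiv> hd (tl (dropWhile (\<lambda>x. x \<noteq> a) xs))"
  shows "b \<in> set xs \<and> r a b \<and> (\<forall>w\<in>set xs. r a w \<longrightarrow> w = b \<or> r b w)"
proof -
  obtain ys zs where xs: "xs = ys @ a # zs" "a \<notin> set ys"
    using split_list_first[OF assms(4)] by blast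
  have asym: "\<not> r y x" if "r x y" for x y
    using that assms(2,3) by (meson irreflpD transpD)
  have after: "w \<in> set zs" if "w \<in> set xs" "r a w" for w
    using that sorted asym[OF that(2)] assms(3) xs(1)
    by (auto simp: sorted_wrt_append irreflp_def)
  then obtain zs' where zs: "zs = b # zs'"
    using assms(5,6) xs by (cases zs) (auto simp: b_def dropWhile_append)
  show ?thesis
    using sorted xs(1) zs after by (auto simp: sorted_wrt_append)
qed

section \<open>Trees as parent maps, root paths and keys\<close>

(* Each node is mapped to its parent (None being the root) and its side. *)
type_synonym 'a ptree = "'a \<Rightarrow> ('a option \<times> side) option"

(* In a key, the node's own entry gets rank 1, between its left (0) and right (2) subtrees. *)
definition side_rank :: "side \<Rightarrow> nat" where
  "side_rank s = (case s of L \<Rightarrow> 0 | R \<Rightarrow> 2)"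

lemma side_rank_simps [simp]: "side_rank L = 0" "side_rank R = 2"
  by (simp_all add: side_rank_def)

lemma side_rank_neq_1 [simp]: "side_rank s \<noteq> 1" "side_rank s \<noteq> Suc 0"
  by (cases s; simp)+

inductive root_path :: "'a ptree \<Rightarrow> 'a option \<Rightarrow> (nat \<times> 'a) list \<Rightarrow> bool" for g where
  root_path_root: "root_path g None []"
| root_path_child: "g c = Some (v, s) \<Longrightarrow> root_path g v P \<Longrightarrow> root_path g (Some c) (P @ [(side_rank s, c)])"

lemma root_path_None_iff [simp]: "root_path g None P \<longleftrightarrow> P = []"
  by (auto elim: root_path.cases intro: root_path_root)

lemma root_path_SomeD: "root_path g (Some c) P \<Longrightarrow> P \<noteq> [] \<and> snd (last P) = c \<and> c \<in> dom g"
  by (auto elim: root_path.cases)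

lemma root_path_node_unique: "root_path g v P \<Longrightarrow> root_path g w P \<Longrightarrow> v = w"
  by (cases v; cases w) (auto dest: root_path_SomeD)

lemma root_path_unique: "root_path g v P \<Longrightarrow> root_path g v Q \<Longrightarrow> P = Q"
proof (induction arbitrary: Q rule: root_path.induct)
  case root_path_root
  then show ?case by simp
next
  case (root_path_child c v s P)
  from root_path_child.prems show ?case
    by (cases rule: root_path.cases) (use root_path_child in auto)
qed

lemma root_path_prefix: "root_path g v (P @ x # Q) \<Longrightarrow> root_path g (Some (snd x)) (P @ [x])"
proof (induction "P @ x # Q" arbitrary: Q rule: root_path.induct)
  case (root_path_child c v s P')
  then show ?case
    by (cases Q rule: rev_cases) (auto intro: root_path.intros)
qed simp

lemma root_path_stepD:
  assumes "root_path g v P" "root_path g w (P @ x # Q)"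
  shows "\<exists>s. g (snd x) = Some (v, s) \<and> fst x = side_rank s"
proof -
  from root_path_prefix[OF assms(2)] obtain v' s where
    "g (snd x) = Some (v', s)" "root_path g v' P" "x = (side_rank s, snd x)"
    by (cases rule: root_path.cases) auto
  with assms(1) show ?thesis
    by (metis fst_conv root_path_node_unique)
qed

lemma root_path_distinct: "root_path g v P \<Longrightarrow> distinct (map snd P)"
proof (induction rule: root_path.induct)
  case (root_path_child c v s P)
  have "c \<notin> snd ` set P"
  proof
    assume "c \<in> snd ` set P"
    then obtain P1 x P2 where "P = P1 @ x # P2" "snd x = c"
      by (metis imageE split_list)
    with root_path_child have "root_path g (Some c) (P1 @ [x])"
      using root_path_prefix by metis
    with root_path_child have "P1 @ [x] = P @ [(side_rank s, c)]"
      by (meson root_path.root_path_child root_path_unique)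
    with \<open>P = P1 @ x # P2\<close> show False by simp
  qed
  with root_path_child show ?case by simp
qed simp

lemma root_path_length_le_card:
  assumes "finite (dom g)" "root_path g v P"
  shows "length P \<le> card (dom g)"
proof -
  have "snd ` set P \<subseteq> dom g"
    using assms(2) by induction auto
  with assms have "card (snd ` set P) \<le> card (dom g)"
    by (simp add: card_mono)
  with root_path_distinct[OF assms(2)] show ?thesis
    by (metis distinct_card length_map set_map)
qed

lemma root_path_mono: "root_path g v P \<Longrightarrow> g \<subseteq>\<^sub>m g' \<Longrightarrow> root_path g' v P"
  by (induction rule: root_path.induct) (auto intro!: root_path.intros dest: map_le_SomeD)

lemma root_path_rank_neq_1: "root_path g v P \<Longrightarrow> x \<in> set P \<Longrightarrow> fst x \<noteq> 1"
  by (induction rule: root_path.induct) auto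

definition rooted :: "'a ptree \<Rightarrow> bool" where
  "rooted g \<longleftrightarrow> (\<forall>c\<in>dom g. \<exists>P. root_path g (Some c) P)"

lemma rootedD: "rooted g \<Longrightarrow> c \<in> dom g \<Longrightarrow> \<exists>P. root_path g (Some c) P"
  by (simp add: rooted_def)

lemma rooted_upd:
  assumes "rooted g" "e \<notin> dom g" "\<forall>q. p = Some q \<longrightarrow> q \<in> dom g"
  shows "rooted (g(e \<mapsto> (p, s)))"
proof -
  have le: "g \<subseteq>\<^sub>m g(e \<mapsto> (p, s))"
    using assms(2) by (auto simp: map_le_def)
  obtain P where "root_path g p P"
    using assms(1,3) by (cases p) (auto dest: rootedD)
  then have "root_path (g(e \<mapsto> (p, s))) (Some e) (P @ [(side_rank s, e)])"
    by (auto intro: root_path_child root_path_mono[OF _ le])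
  with assms(1) show ?thesis
    unfolding rooted_def by (auto intro: root_path_mono[OF _ le])
qed

lemma rooted_restrict:
  assumes "rooted g" and closed: "\<forall>e\<in>S. \<forall>q s. g e = Some (Some q, s) \<longrightarrow> q \<in> S"
  shows "rooted (g |` S)"
proof -
  have "root_path (g |` S) v P" if "root_path g v P" "\<forall>c. v = Some c \<longrightarrow> c \<in> S" for v P
    using that by induction (auto intro!: root_path.intros simp: closed)
  with assms(1) show ?thesis
    unfolding rooted_def by (metis domIff option.inject restrict_map_def)
qed

definition root_children_right :: "'a ptree \<Rightarrow> bool" where
  "root_children_right g \<longleftrightarrow> (\<forall>c s. g c = Some (None, s) \<longrightarrow> s = R)"

lemma root_children_right_mono: "root_children_right g' \<Longrightarrow> g \<subseteq>\<^sub>m g' \<Longrightarrow> root_children_right g"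
  unfolding root_children_right_def by (meson map_le_SomeD)

(* Junk for nodes without a root path. *)
definition key :: "'a ptree \<Rightarrow> 'a \<Rightarrow> (nat \<times> 'a) list" where
  "key g c = (THE P. root_path g (Some c) P) @ [(1, c)]"

lemma key_eq: "root_path g (Some c) P \<Longrightarrow> key g c = P @ [(1, c)]"
  unfolding key_def using root_path_unique by (metis the_equality)

lemma key_child: "g c = Some (v, s) \<Longrightarrow> root_path g v P \<Longrightarrow> key g c = P @ [(side_rank s, c), (1, c)]"
  using key_eq[OF root_path_child] by simp

lemma key_mono: "g \<subseteq>\<^sub>m g' \<Longrightarrow> root_path g (Some c) P \<Longrightarrow> key g' c = key g c"
  by (metis key_eq root_path_mono)

lemma rooted_key_mono:
  assumes "g \<subseteq>\<^sub>m G" "rooted g" "c \<in> dom g"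
  shows "c \<in> dom G \<and> key G c = key g c"
proof -
  obtain P where "root_path g (Some c) P"
    using rootedD[OF assms(2,3)] by blast
  then have "key G c = key g c"
    by (rule key_mono[OF assms(1)])
  moreover have "c \<in> dom G"
    using map_le_implies_dom_le[OF assms(1)] assms(3) by blast
  ultimately show ?thesis by blast
qed

lemma key_not_prefix:
  assumes "root_path g (Some w) P"
  shows "key g w \<noteq> (Q @ [(1, a)]) @ y # ys"
proof
  assume "key g w = (Q @ [(1, a)]) @ y # ys"
  then have "(1, a) \<in> set P"
    using key_eq[OF assms] by (cases ys rule: rev_cases) auto
  with root_path_rank_neq_1[OF assms] show False by fastforce
qed

lemma lexordp_key_cases:
  fixes g :: "'a::linorder ptree"
  assumes "root_path g (Some a) Pa" "root_path g (Some w) Pw" "ord_class.lexordp (key g a) (key g w)"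
  obtains us \<alpha> \<beta> vs ws where "\<alpha> < \<beta>" "key g a = us @ \<alpha> # vs" "key g w = us @ \<beta> # ws"
proof -
  have "\<nexists>y ys. key g w = key g a @ y # ys"
    using key_not_prefix[OF assms(2)] key_eq[OF assms(1)] by simp
  with assms(3)[unfolded lexordp_iff] that show thesis
    by blast
qed

definition tree_less :: "'a::linorder ptree \<Rightarrow> 'a \<Rightarrow> 'a \<Rightarrow> bool" where
  "tree_less g a b \<longleftrightarrow> ord_class.lexordp (key g a) (key g b)"

lemma tree_less_irrefl: "\<not> tree_less g a a"
  by (simp add: tree_less_def lexordp_irreflexive')

lemma tree_less_trans: "tree_less g a b \<Longrightarrow> tree_less g b c \<Longrightarrow> tree_less g a c"
  unfolding tree_less_def by (rule lexordp_trans)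

lemma tree_less_asym: "tree_less g a b \<Longrightarrow> \<not> tree_less g b a"
  using tree_less_irrefl tree_less_trans by blast

lemma tree_less_linear:
  assumes "rooted g" "a \<in> dom g" "b \<in> dom g"
  shows "tree_less g a b \<or> a = b \<or> tree_less g b a"
proof -
  obtain Pa Pb where "root_path g (Some a) Pa" "root_path g (Some b) Pb"
    using assms by (meson rootedD)
  then have "key g a = key g b \<Longrightarrow> a = b"
    by (simp add: key_eq)
  then show ?thesis
    unfolding tree_less_def using lexordp_linear by blast
qed

definition tree_order :: "'a::linorder ptree \<Rightarrow> ('a \<times> 'a) set" where
  "tree_order g = {(a, b). a \<in> dom g \<and> b \<in> dom g \<and> tree_less g a b}"

lemma strict_linear_order_on_tree_order:
  assumes "rooted g"
  shows "strict_linear_order_on (dom g) (tree_order g)"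
  unfolding strict_linear_order_on_def
proof (intro conjI)
  show "trans (tree_order g)"
    by (rule transI) (auto simp: tree_order_def intro: tree_less_trans)
  show "irrefl (tree_order g)"
    by (simp add: irrefl_def tree_order_def tree_less_irrefl)
  show "total_on (dom g) (tree_order g)"
    using tree_less_linear[OF assms] by (auto simp: total_on_def tree_order_def)
qed

lemma tree_less_in_tree_order:
  assumes "g \<subseteq>\<^sub>m G" "rooted g" "a \<in> dom g" "b \<in> dom g" "tree_less g a b"
  shows "(a, b) \<in> tree_order G"
  using rooted_key_mono[OF assms(1,2) assms(3)] rooted_key_mono[OF assms(1,2) assms(4)] assms(5)
  by (simp add: tree_order_def tree_less_def)

section \<open>The traversal lists the nodes in key order\<close>

definition skeleton :: "('r, 'v) rstate \<Rightarrow> 'r nid ptree" where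
  "skeleton st = (\<lambda>c. map_option snd (tree st c))"

lemma dom_skeleton [simp]: "dom (skeleton st) = dom (tree st)"
  by (auto simp: skeleton_def)

lemma set_kids:
  "finite (dom (tree st)) \<Longrightarrow> set (kids st v s) = {c. skeleton st c = Some (v, s)}"
  unfolding kids_def skeleton_def
  by (subst set_sorted_list_of_set) (auto intro: rev_finite_subset)

lemma trav_descendant:
  assumes fin: "finite (dom (tree st))"
  shows "root_path (skeleton st) v P \<Longrightarrow> w \<in> set (trav n st v) \<Longrightarrow>
    \<exists>Q. root_path (skeleton st) (Some w) (P @ Q)"
proof (induction n arbitrary: v P)
  case (Suc n)
  from Suc.prems(2) consider "v = Some w"
    | s c where "c \<in> set (kids st v s)" "w \<in> set (trav n st (Some c))"
    by (auto split: option.splits)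
  then show ?case
  proof cases
    case 1
    with Suc.prems(1) show ?thesis by (metis append_Nil2)
  next
    case 2
    then have "root_path (skeleton st) (Some c) (P @ [(side_rank s, c)])"
      using Suc.prems(1) set_kids[OF fin] by (auto intro: root_path_child)
    from Suc.IH[OF this 2(2)] show ?thesis by auto
  qed
qed simp

lemma trav_complete:
  assumes fin: "finite (dom (tree st))"
  shows "root_path (skeleton st) v P \<Longrightarrow> root_path (skeleton st) (Some w) (P @ Q) \<Longrightarrow>
    length Q < n \<Longrightarrow> w \<in> set (trav n st v)"
proof (induction n arbitrary: v P Q)
  case (Suc n)
  show ?case
  proof (cases Q)
    case Nil
    with Suc.prems(1,2) have "v = Some w" by (simp add: root_path_node_unique)
    then show ?thesis by simp
  next
    case (Cons x Q')
    with Suc.prems(1,2) obtain s where s: "skeleton st (snd x) = Some (v, s)" "x = (side_rank s, snd x)"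
      by (metis prod.collapse root_path_stepD)
    have "root_path (skeleton st) (Some (snd x)) (P @ [x])"
      using Suc.prems(2) Cons root_path_prefix by blast
    with Suc.prems(2,3) Cons have "w \<in> set (trav n st (Some (snd x)))"
      by (intro Suc.IH[of _ _ Q']) auto
    moreover have "snd x \<in> set (kids st v s)"
      using s set_kids[OF fin] by simp
    ultimately show ?thesis by (cases s) auto
  qed
qed simp

lemma set_traversal:
  assumes fin: "finite (dom (tree st))" and "rooted (skeleton st)"
  shows "set (traversal st) = dom (tree st)"
proof
  show "set (traversal st) \<subseteq> dom (tree st)"
    unfolding traversal_def using trav_descendant[OF fin root_path_root]
    by (metis dom_skeleton root_path_SomeD subsetI)
  show "dom (tree st) \<subseteq> set (traversal st)"
  proof
    fix w assume "w \<in> dom (tree st)"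
    then obtain P where P: "root_path (skeleton st) (Some w) P"
      using assms(2) by (metis dom_skeleton rootedD)
    moreover have "length P < card (dom (tree st)) + 1"
      using root_path_length_le_card[OF _ P] fin by simp
    ultimately show "w \<in> set (traversal st)"
      unfolding traversal_def by (intro trav_complete[OF fin root_path_root, of w P]) simp_all
  qed
qed

lemma trav_sorted:
  assumes fin: "finite (dom (tree st))"
  shows "root_path (skeleton st) v P \<Longrightarrow> sorted_wrt (tree_less (skeleton st)) (trav n st v)"
proof (induction n arbitrary: v P)
  case (Suc n)
  (* trav (Suc n) st v is a concatenation of blocks labelled (0, c) for the left children c,
     (1, c) for v = Some c, and (2, c) for the right children c; the keys in a block extend P
     by its label. *)
  let ?g = "skeleton st"
  define lbl where "lbl s = map (\<lambda>c. (side_rank s, c)) (kids st v s)" for s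
  define ls where "ls = lbl L @ (case v of None \<Rightarrow> [] | Some c \<Rightarrow> [(1, c)]) @ lbl R"
  define B where "B l = (if fst l = 1 then [snd l] else trav n st (Some (snd l)))" for l :: "nat \<times> 'a nid"
  have trav_eq: "trav (Suc n) st v = concat (map B ls)"
    by (cases v) (simp_all add: ls_def lbl_def B_def o_def)
  have ls_sorted: "sorted_wrt (<) ls"
    using strict_sorted_list_of_set
    by (auto simp: ls_def lbl_def kids_def sorted_wrt_append sorted_wrt_map split: option.split)
  have kid_path: "root_path ?g (Some c) (P @ [(side_rank s, c)])" if "c \<in> set (kids st v s)" for c s
    using that Suc.prems set_kids[OF fin] by (auto intro: root_path_child)
  have lbl_cases: "(fst l = 1 \<and> v = Some (snd l)) \<or> root_path ?g (Some (snd l)) (P @ [l])"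
    if "l \<in> set ls" for l
    using that kid_path[of _ L] kid_path[of _ R] by (auto simp: ls_def lbl_def split: option.splits)
  have B_sorted: "sorted_wrt (tree_less ?g) (B l)" if "l \<in> set ls" for l
    using lbl_cases[OF that] Suc.IH by (auto simp: B_def)
  have B_key: "\<exists>Z. key ?g a = P @ l # Z" if "l \<in> set ls" "a \<in> set (B l)" for l a
    using lbl_cases[OF that(1)]
  proof
    assume l: "fst l = 1 \<and> v = Some (snd l)"
    with that(2) have "l = (1, a)"
      by (simp add: B_def prod_eq_iff)
    with l Suc.prems show ?thesis
      by (simp add: key_eq)
  next
    assume l: "root_path ?g (Some (snd l)) (P @ [l])"
    with that(2) have "fst l \<noteq> 1"
      by (metis last_in_set last_snoc root_path_rank_neq_1 snoc_eq_iff_butlast)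
    with l that(2) obtain Q where "root_path ?g (Some a) ((P @ [l]) @ Q)"
      using trav_descendant[OF fin] by (fastforce simp: B_def)
    then show ?thesis by (simp add: key_eq)
  qed
  have tree_less_key: "tree_less ?g = (\<lambda>a b. ord_class.lexordp (key ?g a) (key ?g b))"
    by (simp add: fun_eq_iff tree_less_def)
  have "sorted_wrt (\<lambda>a b. ord_class.lexordp (key ?g a) (key ?g b)) (concat (map B ls))"
    using ls_sorted B_sorted[unfolded tree_less_key] B_key by (rule sorted_wrt_concat_blocks)
  then show ?case
    unfolding trav_eq tree_less_key .
qed simp

lemma traversal_sorted:
  "finite (dom (tree st)) \<Longrightarrow> sorted_wrt (tree_less (skeleton st)) (traversal st)"
  unfolding traversal_def using trav_sorted root_path_root by blast

lemma elems_sorted: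
  "finite (dom (tree st)) \<Longrightarrow> sorted_wrt (tree_less (skeleton st)) (elems st)"
  unfolding elems_def by (rule sorted_wrt_filter) (rule traversal_sorted)

section \<open>The key of an inserted node\<close>

definition placed_after :: "'a::linorder ptree \<Rightarrow> 'a option \<Rightarrow> (nat \<times> 'a) list \<Rightarrow> bool" where
  "placed_after g lo K \<longleftrightarrow>
     (\<forall>a. lo = Some a \<longrightarrow> ord_class.lexordp (key g a) K) \<and>
     (\<forall>w\<in>dom g. (\<forall>a. lo = Some a \<longrightarrow> tree_less g a w) \<longrightarrow> ord_class.lexordp K (key g w))"

lemma placed_afterD:
  "placed_after g (Some a) K \<Longrightarrow> ord_class.lexordp (key g a) K"
  "placed_after g lo K \<Longrightarrow> w \<in> dom g \<Longrightarrow> (\<And>a. lo = Some a \<Longrightarrow> tree_less g a w) \<Longrightarrow>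
    ord_class.lexordp K (key g w)"
  by (simp_all add: placed_after_def)

lemma tree_less_right_child:
  assumes "root_path g (Some a) P" "g c = Some (Some a, R)"
  shows "tree_less g a c"
proof -
  have "key g c = P @ (2, c) # [(1, c)]"
    using key_child[OF assms(2,1)] by simp
  with assms(1) show ?thesis
    by (simp add: tree_less_def key_eq lexordp_append_left_rightI)
qed

lemma tree_less_cases:
  fixes g :: "'a::linorder ptree"
  assumes a: "root_path g (Some a) Pa" and w: "root_path g (Some w) Pw" and "tree_less g a w"
  obtains (a_in_left_subtree) \<alpha> vs where "Pa = Pw @ \<alpha> # vs" "\<alpha> < (1, w)"
    | (w_in_right_subtree) \<beta> ws where "Pw = Pa @ \<beta> # ws" "(1, a) < \<beta>"
    | (paths_diverge) us \<alpha> \<beta> vs ws where "Pa = us @ \<alpha> # vs" "Pw = us @ \<beta> # ws" "\<alpha> < \<beta>"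
proof -
  obtain us \<alpha> \<beta> vs ws where lt: "\<alpha> < \<beta>"
    and ka: "Pa @ [(1, a)] = us @ \<alpha> # vs" and kw: "Pw @ [(1, w)] = us @ \<beta> # ws"
    using lexordp_key_cases[OF a w] assms(3) unfolding tree_less_def key_eq[OF a] key_eq[OF w]
    by metis
  show thesis
  proof (cases "vs = []")
    case vs: True
    with ka have Pa: "Pa = us" "\<alpha> = (1, a)" by simp_all
    show thesis
    proof (cases "ws = []")
      case True
      with kw have "Pw = us" "\<beta> = (1, w)" by simp_all
      with Pa a w have "\<alpha> = \<beta>" by (metis option.inject root_path_node_unique)
      with lt show thesis by simp
    next
      case False
      with kw Pa lt show thesis by (intro w_in_right_subtree[of \<beta> "butlast ws"]) (simp_all add: snoc_eq_Cons_split)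
    qed
  next
    case vs: False
    show thesis
    proof (cases "ws = []")
      case True
      with kw lt vs ka show thesis by (intro a_in_left_subtree[of \<alpha> "butlast vs"]) (simp_all add: snoc_eq_Cons_split)
    next
      case False
      with kw lt vs ka show thesis by (intro paths_diverge[of us \<alpha> "butlast vs" \<beta> "butlast ws"]) (simp_all add: snoc_eq_Cons_split)
    qed
  qed
qed

lemma dom_empty_if_no_right_root_child:
  assumes "rooted g" "root_children_right g" "\<forall>c. g c \<noteq> Some (None, R)"
  shows "dom g = {}"
proof (rule ccontr)
  assume "dom g \<noteq> {}"
  then obtain w Pw where "root_path g (Some w) Pw"
    using assms(1) by (metis all_not_in_conv rootedD)
  then obtain x Q where "root_path g (Some w) ([] @ x # Q)"
    by (metis append_Nil neq_Nil_conv root_path_SomeD)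
  with assms(2,3) show False
    unfolding root_children_right_def by (metis root_path_root root_path_stepD)
qed

lemma placed_after_right_child:
  fixes g :: "'a::linorder ptree"
  assumes "rooted g" "root_children_right g" and lo: "root_path g lo P"
    and no_right: "\<forall>c. g c \<noteq> Some (lo, R)"
  shows "placed_after g lo (P @ [(side_rank R, e), (1, e)])"
proof (cases lo)
  case None
  have "dom g = {}"
    using no_right None by (intro dom_empty_if_no_right_root_child[OF assms(1,2)]) simp
  with None show ?thesis by (simp add: placed_after_def)
next
  case (Some a)
  have a: "root_path g (Some a) P"
    using lo Some by simp
  have "ord_class.lexordp (P @ [(2, e), (1, e)]) (key g w)"
    if w_dom: "w \<in> dom g" and "tree_less g a w" for w
  proof -
    obtain Pw where w: "root_path g (Some w) Pw"
      using rootedD[OF assms(1) w_dom] by blast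
    from a w \<open>tree_less g a w\<close> show ?thesis
    proof (cases rule: tree_less_cases)
      case (a_in_left_subtree \<alpha> vs)
      then show ?thesis by (simp add: key_eq[OF w] lexordp_append_left_rightI)
    next
      case (w_in_right_subtree \<beta> ws)
      then obtain s where "g (snd \<beta>) = Some (Some a, s)" "fst \<beta> = side_rank s"
        using root_path_stepD a w by blast
      with w_in_right_subtree(2) have "s = R"
        by (cases s) (auto simp: less_prod_def)
      with \<open>g (snd \<beta>) = Some (Some a, s)\<close> no_right Some show ?thesis by simp
    next
      case (paths_diverge us \<alpha> \<beta> vs ws)
      then show ?thesis by (simp add: key_eq[OF w] lexordp_append_left_rightI)
    qed
  qed
  moreover have "ord_class.lexordp (key g a) (P @ [(2, e), (1, e)])"
    using key_eq[OF a] lexordp_append_left_rightI[of "(1, a)" "(2, e)" P "[]"] by simp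
  ultimately show ?thesis
    using Some by (simp add: placed_after_def)
qed

lemma placed_after_left_child:
  fixes g :: "'a::linorder ptree"
  assumes "rooted g" and ro: "root_path g (Some ro) P"
    and lo: "\<forall>a. lo = Some a \<longrightarrow> a \<in> dom g \<and> tree_less g a ro \<and> (\<exists>c. g c = Some (Some a, R))"
    and succ: "\<forall>w\<in>dom g. (\<forall>a. lo = Some a \<longrightarrow> tree_less g a w) \<longrightarrow> w = ro \<or> tree_less g ro w"
  shows "placed_after g lo (P @ [(side_rank L, e), (1, e)])"
proof -
  let ?K = "P @ [(0, e), (1, e)]"
  have K_ro: "ord_class.lexordp ?K (key g ro)"
    using key_eq[OF ro] lexordp_append_left_rightI[of "(0, e)" "(1, ro)" P "[(1, e)]"] by simp
  have "ord_class.lexordp (key g a) ?K" if lo_a: "lo = Some a" for a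
  proof -
    obtain c where c: "g c = Some (Some a, R)" and "a \<in> dom g" "tree_less g a ro"
      using lo lo_a by blast
    obtain Pa where a: "root_path g (Some a) Pa"
      using rootedD[OF assms(1) \<open>a \<in> dom g\<close>] by blast
    have "c \<in> dom g" "tree_less g a c"
      using c a by (auto intro: tree_less_right_child)
    then have not_c_ro: "\<not> tree_less g c ro"
      using succ lo_a tree_less_asym tree_less_irrefl by blast
    from a ro \<open>tree_less g a ro\<close> show ?thesis
    proof (cases rule: tree_less_cases)
      case (a_in_left_subtree \<alpha> vs)
      have "key g c = P @ \<alpha> # (vs @ [(2, c), (1, c)])"
        using a_in_left_subtree key_child[OF c a] by simp
      with a_in_left_subtree(2) have "tree_less g c ro"
        unfolding tree_less_def by (simp add: key_eq[OF ro] lexordp_append_left_rightI)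
      with not_c_ro show ?thesis by blast
    next
      case (w_in_right_subtree \<beta> ws)
      then show ?thesis by (simp add: key_eq[OF a] lexordp_append_left_rightI)
    next
      case (paths_diverge us \<alpha> \<beta> vs ws)
      then show ?thesis by (simp add: key_eq[OF a] lexordp_append_left_rightI)
    qed
  qed
  moreover have "ord_class.lexordp ?K (key g w)"
    if "w \<in> dom g" "\<forall>a. lo = Some a \<longrightarrow> tree_less g a w" for w
    using succ that K_ro lexordp_trans unfolding tree_less_def by metis
  ultimately show ?thesis
    by (simp add: placed_after_def)
qed

lemma traversal_successor:
  fixes st :: "('r::linorder, 'v) rstate"
  defines "g \<equiv> skeleton st"
  assumes fin: "finite (dom (tree st))" and rooted: "rooted g"
    and right_child: "g c = Some (lo, R)" and lo_dom: "\<forall>a. lo = Some a \<longrightarrow> a \<in> dom g"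
  defines "ro \<equiv> (case lo of None \<Rightarrow> hd (traversal st)
                   | Some a \<Rightarrow> hd (tl (dropWhile (\<lambda>c. c \<noteq> a) (traversal st))))"
  shows "ro \<in> dom g \<and> (\<forall>a. lo = Some a \<longrightarrow> tree_less g a ro) \<and>
    (\<forall>w\<in>dom g. (\<forall>a. lo = Some a \<longrightarrow> tree_less g a w) \<longrightarrow> w = ro \<or> tree_less g ro w)"
proof -
  let ?T = "traversal st"
  have T: "set ?T = dom g" "sorted_wrt (tree_less g) ?T"
    using set_traversal[OF fin] traversal_sorted[OF fin] rooted by (simp_all add: g_def)
  have "c \<in> set ?T"
    using T(1) right_child by auto
  show ?thesis
  proof (cases lo)
    case None
    with \<open>c \<in> set ?T\<close> obtain T' where "?T = ro # T'"
      by (cases ?T) (simp_all add: ro_def)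
    with T None show ?thesis by auto
  next
    case (Some a)
    obtain Pa where "root_path g (Some a) Pa"
      using rootedD[OF rooted] lo_dom Some by blast
    with right_child Some have "tree_less g a c"
      by (simp add: tree_less_right_child)
    moreover have "transp (tree_less g)" "irreflp (tree_less g)"
      by (auto intro: transpI irreflpI tree_less_trans simp: tree_less_irrefl)
    ultimately show ?thesis
      using sorted_wrt_successor[OF T(2)] T(1) lo_dom \<open>c \<in> set ?T\<close> Some
      by (simp add: ro_def)
  qed
qed

lemma set_elems_subset_dom:
  "finite (dom (tree st)) \<Longrightarrow> rooted (skeleton st) \<Longrightarrow> set (elems st) \<subseteq> dom (tree st)"
  using set_traversal by (fastforce simp: elems_def)

lemma elems_nth_in_dom:
  "finite (dom (tree st)) \<Longrightarrow> rooted (skeleton st) \<Longrightarrow> j < length (elems st) \<Longrightarrow>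
    elems st ! j \<in> dom (tree st)"
  using set_elems_subset_dom nth_mem by blast

lemma left_origin_in_dom:
  assumes "finite (dom (tree st))" "rooted (skeleton st)" "i \<le> length (elems st)"
    and "(if i = 0 then None else Some (elems st ! (i - 1))) = Some a"
  shows "a \<in> dom (tree st)"
proof -
  have "i - 1 < length (elems st)" "a = elems st ! (i - 1)"
    using assms(3,4) by (auto split: if_splits)
  then show ?thesis
    using elems_nth_in_dom[OF assms(1,2)] by simp
qed

lemma gen_insert_placed:
  fixes st :: "('r::linorder, 'v) rstate" and i :: nat
  defines "g \<equiv> skeleton st" and "lo \<equiv> (if i = 0 then None else Some (elems st ! (i - 1)))"
  assumes fin: "finite (dom (tree st))" and rooted: "rooted g" and "root_children_right g"
    and "i \<le> length (elems st)" and msg: "gen_insert st r i x = InsMsg e x' p s"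
  shows "\<exists>P. root_path g p P \<and> (p = None \<longrightarrow> s = R) \<and>
    placed_after g lo (P @ [(side_rank s, e), (1, e)])"
proof -
  let ?T = "traversal st"
  define ro where "ro = (case lo of None \<Rightarrow> hd ?T | Some a \<Rightarrow> hd (tl (dropWhile (\<lambda>c. c \<noteq> a) ?T)))"
  have lo_dom: "\<forall>a. lo = Some a \<longrightarrow> a \<in> dom g"
    using left_origin_in_dom[OF fin] rooted \<open>i \<le> length (elems st)\<close> by (simp add: lo_def g_def)
  obtain Plo where Plo: "root_path g lo Plo"
    using lo_dom rootedD[OF rooted] by (cases lo) auto
  have msg': "InsMsg e x' p s =
      (if kids st lo R = [] then InsMsg (new_id st r) x lo R else InsMsg (new_id st r) x (Some ro) L)"
    using msg unfolding gen_insert_def Let_def lo_def[symmetric] ro_def[symmetric] by (rule sym)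
  show ?thesis
  proof (cases "kids st lo R = []")
    case True
    then have "\<forall>c. g c \<noteq> Some (lo, R)"
      using set_kids[OF fin, of lo R] by (auto simp: g_def)
    then have "placed_after g lo (Plo @ [(side_rank R, e), (1, e)])"
      by (rule placed_after_right_child[OF rooted \<open>root_children_right g\<close> Plo])
    moreover have "p = lo" "s = R"
      using True msg' by simp_all
    ultimately show ?thesis
      using Plo by blast
  next
    case False
    then obtain c where "g c = Some (lo, R)"
      using set_kids[OF fin, of lo R] by (fastforce simp: g_def neq_Nil_conv)
    with traversal_successor[OF fin] rooted lo_dom
    have ro: "ro \<in> dom g" "\<forall>a. lo = Some a \<longrightarrow> tree_less g a ro"
      "\<forall>w\<in>dom g. (\<forall>a. lo = Some a \<longrightarrow> tree_less g a w) \<longrightarrow> w = ro \<or> tree_less g ro w"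
      by (simp_all add: g_def ro_def)
    obtain Pro where Pro: "root_path g (Some ro) Pro"
      using rootedD[OF rooted ro(1)] by blast
    have "placed_after g lo (Pro @ [(side_rank L, e), (1, e)])"
      using placed_after_left_child[OF rooted Pro] ro lo_dom \<open>g c = Some (lo, R)\<close> by blast
    moreover have "p = Some ro" "s = L"
      using False msg' by simp_all
    ultimately show ?thesis
      using Pro by blast
  qed
qed

lemma placed_after_elems:
  fixes st :: "('r::linorder, 'v) rstate"
  defines "g \<equiv> skeleton st" and "as \<equiv> elems st"
  assumes fin: "finite (dom (tree st))" and rooted: "rooted g" and "i \<le> length as"
    and placed: "placed_after g (if i = 0 then None else Some (as ! (i - 1))) K"
  shows "(\<forall>j<i. ord_class.lexordp (key g (as ! j)) K) \<and>
    (\<forall>j. i \<le> j \<and> j < length as \<longrightarrow> ord_class.lexordp K (key g (as ! j)))"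
proof -
  have sorted: "sorted_wrt (tree_less g) as"
    using elems_sorted[OF fin] by (simp add: g_def as_def)
  show ?thesis
  proof (intro conjI allI impI)
    fix j
    assume "j < i"
    with placed have last: "ord_class.lexordp (key g (as ! (i - 1))) K"
      using placed_afterD(1) by simp
    show "ord_class.lexordp (key g (as ! j)) K"
    proof (cases "j = i - 1")
      case False
      with \<open>j < i\<close> have "j < i - 1" by simp
      with sorted \<open>i \<le> length as\<close> have "tree_less g (as ! j) (as ! (i - 1))"
        by (simp add: sorted_wrt_nth_less)
      then show ?thesis
        using last unfolding tree_less_def by (rule lexordp_trans)
    qed (use last in simp)
  next
    fix j
    assume j: "i \<le> j \<and> j < length as"
    show "ord_class.lexordp K (key g (as ! j))"
    proof (rule placed_afterD(2)[OF placed])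
      show "as ! j \<in> dom g"
        using j elems_nth_in_dom[OF fin] rooted by (simp add: g_def as_def)
      fix a
      assume "(if i = 0 then None else Some (as ! (i - 1))) = Some a"
      with j show "tree_less g a (as ! j)"
        by (auto split: if_splits intro: sorted_wrt_nth_less[OF sorted])
    qed
  qed
qed

section \<open>The message log and the tree of all insertions\<close>

type_synonym ('r, 'v) msg_log = "('r \<times> ('r, 'v) msg \<times> nat set) list"

abbreviation msg_at :: "('r, 'v) msg_log \<Rightarrow> nat \<Rightarrow> ('r, 'v) msg" where
  "msg_at ms j \<equiv> fst (snd (ms ! j))"

abbreviation deps_at :: "('r, 'v) msg_log \<Rightarrow> nat \<Rightarrow> nat set" where
  "deps_at ms j \<equiv> snd (snd (ms ! j))"

definition inserts_at :: "('r, 'v) msg_log \<Rightarrow> nat \<Rightarrow> 'r nid \<Rightarrow> bool" where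
  "inserts_at ms j e \<longleftrightarrow> j < length ms \<and> (\<exists>x p s. msg_at ms j = InsMsg e x p s)"

definition delivered_ins :: "('r, 'v) msg_log \<Rightarrow> nat set \<Rightarrow> 'r nid set" where
  "delivered_ins ms D = {e. \<exists>j\<in>D. inserts_at ms j e}"

definition delivered_del :: "('r, 'v) msg_log \<Rightarrow> nat set \<Rightarrow> 'r nid set" where
  "delivered_del ms D = {e. \<exists>j\<in>D. j < length ms \<and> msg_at ms j = DelMsg e}"

lemma inserts_at_snoc:
  "inserts_at (ms @ [m]) j e \<longleftrightarrow>
     inserts_at ms j e \<or> (j = length ms \<and> (\<exists>x p s. fst (snd m) = InsMsg e x p s))"
  by (auto simp: inserts_at_def nth_append)

lemma inserts_at_append: "inserts_at ms j e \<Longrightarrow> inserts_at (ms @ ys) j e"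
  by (auto simp: inserts_at_def nth_append)

lemma delivered_ins_snoc:
  "D \<subseteq> {..<length ms} \<Longrightarrow> delivered_ins (ms @ [m]) D = delivered_ins ms D"
  by (auto simp: delivered_ins_def inserts_at_snoc)

lemma delivered_del_snoc:
  "D \<subseteq> {..<length ms} \<Longrightarrow> delivered_del (ms @ [m]) D = delivered_del ms D"
  by (auto simp: delivered_del_def nth_append)

fun msg_node :: "('r, 'v) msg \<Rightarrow> 'r nid ptree \<Rightarrow> 'r nid ptree" where
  "msg_node (InsMsg e x p s) g = g(e \<mapsto> (p, s))"
| "msg_node (DelMsg e) g = g"

definition log_tree :: "('r, 'v) msg_log \<Rightarrow> 'r nid ptree" where
  "log_tree ms = fold (\<lambda>m. msg_node (fst (snd m))) ms Map.empty"

lemma log_tree_snoc: "log_tree (ms @ [m]) = msg_node (fst (snd m)) (log_tree ms)"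
  by (simp add: log_tree_def)

lemma skeleton_apply_msg: "skeleton (apply_msg m st) = msg_node m (skeleton st)"
  by (cases m) (auto simp: skeleton_def fun_eq_iff split: option.splits)

lemma skeleton_ctr_update [simp]: "skeleton (st\<lparr>ctr := n\<rparr>) = skeleton st"
  by (simp add: skeleton_def)

lemma dom_msg_node: "dom (msg_node m g) = dom g \<union> {e. \<exists>x p s. m = InsMsg e x p s}"
  by (cases m) auto

lemma dom_log_tree: "dom (log_tree ms) = {e. \<exists>j. inserts_at ms j e}"
proof (induction ms rule: rev_induct)
  case (snoc m ms)
  then show ?case
    by (auto simp: log_tree_snoc dom_msg_node inserts_at_snoc)
qed (simp add: log_tree_def inserts_at_def)

lemma finite_dom_log_tree: "finite (dom (log_tree ms))"
proof (induction ms rule: rev_induct)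
  case (snoc m ms)
  have "finite {e. \<exists>x p s. fst (snd m) = InsMsg e x p s}"
    by (cases "fst (snd m)") simp_all
  with snoc show ?case
    by (simp add: log_tree_snoc dom_msg_node)
qed (simp add: log_tree_def)

lemma delivered_ins_subset_dom: "delivered_ins ms D \<subseteq> dom (log_tree ms)"
  by (auto simp: delivered_ins_def dom_log_tree)

definition unique_inserts :: "('r, 'v) msg_log \<Rightarrow> bool" where
  "unique_inserts ms \<longleftrightarrow> (\<forall>j1 j2 e. inserts_at ms j1 e \<longrightarrow> inserts_at ms j2 e \<longrightarrow> j1 = j2)"

lemma unique_inserts_appendD: "unique_inserts (ms @ ys) \<Longrightarrow> unique_inserts ms"
  unfolding unique_inserts_def by (meson inserts_at_append)

lemma unique_inserts_snoc:
  assumes "unique_inserts ms" and "\<forall>e x p s. fst (snd m) = InsMsg e x p s \<longrightarrow> e \<notin> dom (log_tree ms)"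
  shows "unique_inserts (ms @ [m])"
  using assms unfolding unique_inserts_def dom_log_tree
  by (auto simp: inserts_at_snoc)

lemma log_tree_inserts_at:
  "unique_inserts ms \<Longrightarrow> j < length ms \<Longrightarrow> msg_at ms j = InsMsg e x p s \<Longrightarrow>
    log_tree ms e = Some (p, s)"
proof (induction ms rule: rev_induct)
  case (snoc m ms)
  show ?case
  proof (cases "j < length ms")
    case True
    with snoc.prems have "log_tree ms e = Some (p, s)"
      by (intro snoc.IH) (auto simp: nth_append dest: unique_inserts_appendD)
    moreover have "\<nexists>x p s. fst (snd m) = InsMsg e x p s"
      using snoc.prems True unfolding unique_inserts_def
      by (metis inserts_at_def inserts_at_snoc less_irrefl_nat nth_append)
    ultimately show ?thesis
      by (cases "fst (snd m)") (auto simp: log_tree_snoc)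
  next
    case False
    with snoc.prems show ?thesis by (simp add: log_tree_snoc nth_append)
  qed
qed simp

lemma log_tree_prefix:
  assumes "unique_inserts (ms @ ys)"
  shows "log_tree ms \<subseteq>\<^sub>m log_tree (ms @ ys)"
  unfolding map_le_def
proof
  fix e
  assume "e \<in> dom (log_tree ms)"
  then obtain j x p s where "j < length ms" "msg_at ms j = InsMsg e x p s"
    by (auto simp: dom_log_tree inserts_at_def)
  with assms show "log_tree ms e = log_tree (ms @ ys) e"
    using log_tree_inserts_at[of ms] log_tree_inserts_at[of "ms @ ys" j]
    by (simp add: nth_append unique_inserts_appendD)
qed

definition msg_causal :: "('r, 'v) msg_log \<Rightarrow> nat set \<Rightarrow> ('r, 'v) msg \<Rightarrow> bool" where
  "msg_causal ms D m \<longleftrightarrow>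
     (\<forall>e x q s. m = InsMsg e x (Some q) s \<longrightarrow> q \<in> delivered_ins ms D) \<and>
     (\<forall>e. m = DelMsg e \<longrightarrow> e \<in> delivered_ins ms D)"

lemma msg_causal_simps [simp]:
  "msg_causal ms D (InsMsg e x p s) \<longleftrightarrow> (\<forall>q. p = Some q \<longrightarrow> q \<in> delivered_ins ms D)"
  "msg_causal ms D (DelMsg e) \<longleftrightarrow> e \<in> delivered_ins ms D"
  unfolding msg_causal_def by blast+

lemma msg_causal_append: "msg_causal ms D m \<Longrightarrow> msg_causal (ms @ ys) D m"
  unfolding msg_causal_def delivered_ins_def by (blast intro: inserts_at_append)

definition log_ok :: "('r::linorder, 'v) msg_log \<Rightarrow> bool" where
  "log_ok ms \<longleftrightarrow> unique_inserts ms \<and> (\<forall>j<length ms. msg_causal ms (deps_at ms j) (msg_at ms j)) \<and>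
     rooted (log_tree ms) \<and> root_children_right (log_tree ms)"

lemma log_okD:
  assumes "log_ok ms"
  shows "unique_inserts ms" "j < length ms \<Longrightarrow> msg_causal ms (deps_at ms j) (msg_at ms j)"
    "rooted (log_tree ms)" "root_children_right (log_tree ms)"
  using assms by (simp_all add: log_ok_def)

lemma log_ok_snoc:
  assumes ok: "log_ok ms" and causal: "msg_causal ms D m"
    and new: "\<forall>e x p s. m = InsMsg e x p s \<longrightarrow> e \<notin> dom (log_tree ms) \<and> (p = None \<longrightarrow> s = R)"
  shows "log_ok (ms @ [(r, m, D)])"
proof -
  have "unique_inserts (ms @ [(r, m, D)])"
    using ok new by (intro unique_inserts_snoc) (auto simp: log_ok_def)
  moreover have "msg_causal (ms @ [(r, m, D)]) (deps_at (ms @ [(r, m, D)]) j) (msg_at (ms @ [(r, m, D)]) j)"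
    if "j < length (ms @ [(r, m, D)])" for j
    using that ok causal by (cases "j < length ms") (auto simp: log_ok_def nth_append intro: msg_causal_append)
  moreover have "rooted (log_tree (ms @ [(r, m, D)])) \<and> root_children_right (log_tree (ms @ [(r, m, D)]))"
  proof (cases m)
    case (InsMsg e x p s)
    then have "\<forall>q. p = Some q \<longrightarrow> q \<in> dom (log_tree ms)"
      using causal delivered_ins_subset_dom by (fastforce simp: msg_causal_def)
    moreover have "e \<notin> dom (log_tree ms)" "p = None \<Longrightarrow> s = R"
      using new InsMsg by simp_all
    ultimately show ?thesis
      using ok InsMsg rooted_upd[of "log_tree ms" e p s]
      by (auto simp: log_ok_def log_tree_snoc root_children_right_def)
  qed (use ok in \<open>simp add: log_ok_def log_tree_snoc\<close>)
  ultimately show ?thesis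
    by (simp add: log_ok_def)
qed

(* The second conjunct, causal closure of the delivered set, keeps the received elements closed
   under parents and prevents a deletion from being delivered before its insertion. *)
definition replica_ok :: "'r \<Rightarrow> ('r, 'v) msg_log \<Rightarrow> nat set \<Rightarrow> ('r, 'v) rstate \<Rightarrow> bool" where
  "replica_ok r ms D st \<longleftrightarrow>
     D \<subseteq> {..<length ms} \<and> (\<forall>j\<in>D. deps_at ms j \<subseteq> D) \<and>
     skeleton st = log_tree ms |` delivered_ins ms D \<and>
     (\<forall>e\<in>dom (tree st). visible st e \<longleftrightarrow> e \<notin> delivered_del ms D) \<and>
     (\<forall>e\<in>dom (log_tree ms). fst e = r \<longrightarrow> snd e < ctr st)"

lemma delivered_ins_mono: "D \<subseteq> D' \<Longrightarrow> delivered_ins ms D \<subseteq> delivered_ins ms D'"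
  by (auto simp: delivered_ins_def)

lemma delivered_ins_insert:
  "delivered_ins ms (insert j D) = delivered_ins ms D \<union> {e. inserts_at ms j e}"
  by (auto simp: delivered_ins_def)

lemma delivered_del_insert:
  "delivered_del ms (insert j D) = delivered_del ms D \<union> {e. j < length ms \<and> msg_at ms j = DelMsg e}"
  by (auto simp: delivered_del_def)

lemma replica_ok_skeleton:
  "replica_ok r ms D st \<Longrightarrow> skeleton st = log_tree ms |` delivered_ins ms D"
  by (simp add: replica_ok_def)

lemma replica_ok_dom: "replica_ok r ms D st \<Longrightarrow> dom (tree st) = delivered_ins ms D"
  using replica_ok_skeleton delivered_ins_subset_dom
  by (metis dom_restrict dom_skeleton inf.absorb_iff2)

lemma replica_ok_finite: "replica_ok r ms D st \<Longrightarrow> finite (dom (tree st))"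
  by (simp add: replica_ok_dom finite_subset[OF delivered_ins_subset_dom finite_dom_log_tree])

lemma replica_ok_skeleton_le: "replica_ok r ms D st \<Longrightarrow> skeleton st \<subseteq>\<^sub>m log_tree ms"
  by (simp add: replica_ok_skeleton map_le_def)

lemma replica_ok_rooted:
  assumes ok: "log_ok ms" and rep: "replica_ok r ms D st"
  shows "rooted (skeleton st)"
proof -
  have "\<forall>e\<in>delivered_ins ms D. \<forall>q s. log_tree ms e = Some (Some q, s) \<longrightarrow> q \<in> delivered_ins ms D"
  proof (intro ballI allI impI)
    fix e q s
    assume e: "e \<in> delivered_ins ms D" and parent: "log_tree ms e = Some (Some q, s)"
    obtain j x p s' where j: "j \<in> D" "j < length ms" "msg_at ms j = InsMsg e x p s'"
      using e unfolding delivered_ins_def inserts_at_def by blast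
    with parent have "p = Some q"
      using log_tree_inserts_at[OF log_okD(1)[OF ok]] by fastforce
    with j have "q \<in> delivered_ins ms (deps_at ms j)"
      using log_okD(2)[OF ok, of j] by simp
    moreover have "deps_at ms j \<subseteq> D"
      using rep j(1) by (simp add: replica_ok_def)
    ultimately show "q \<in> delivered_ins ms D"
      using delivered_ins_mono by blast
  qed
  then show ?thesis
    unfolding replica_ok_skeleton[OF rep] by (rule rooted_restrict[OF log_okD(3)[OF ok]])
qed

lemma replica_ok_root_children_right:
  "log_ok ms \<Longrightarrow> replica_ok r ms D st \<Longrightarrow> root_children_right (skeleton st)"
  by (rule root_children_right_mono[OF log_okD(4) replica_ok_skeleton_le])

lemma replica_ok_tick: "replica_ok r ms D st \<Longrightarrow> replica_ok r ms D (st\<lparr>ctr := Suc (ctr st)\<rparr>)"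
  by (fastforce simp: replica_ok_def visible_def)

lemma replica_ok_new_id: "replica_ok r ms D st \<Longrightarrow> new_id st r \<notin> dom (log_tree ms)"
  unfolding replica_ok_def new_id_def by (metis fst_conv snd_conv less_irrefl)

lemma replica_ok_snoc:
  assumes rep: "replica_ok r ms D st" and uniq: "unique_inserts (ms @ [m])"
    and fresh: "\<forall>e x p s. fst (snd m) = InsMsg e x p s \<longrightarrow> fst e = r \<longrightarrow> snd e < ctr st"
  shows "replica_ok r (ms @ [m]) D st"
proof -
  have D: "D \<subseteq> {..<length ms}"
    using rep by (simp add: replica_ok_def)
  then have "\<forall>j\<in>D. deps_at (ms @ [m]) j = deps_at ms j"
    by (auto simp: nth_append)
  moreover have "log_tree (ms @ [m]) |` delivered_ins ms D = log_tree ms |` delivered_ins ms D"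
    using log_tree_prefix[OF uniq] delivered_ins_subset_dom by (rule restrict_map_le_eq)
  moreover have "\<forall>e\<in>dom (log_tree (ms @ [m])). fst e = r \<longrightarrow> snd e < ctr st"
    using rep fresh by (auto simp: replica_ok_def log_tree_snoc dom_msg_node)
  ultimately show ?thesis
    using rep D by (auto simp: replica_ok_def delivered_ins_snoc delivered_del_snoc)
qed

lemma not_deleted_before_inserted:
  assumes ok: "log_ok ms" and closed: "\<forall>j'\<in>D. deps_at ms j' \<subseteq> D"
    and ins: "inserts_at ms j e" and "j \<notin> D"
  shows "e \<notin> delivered_del ms D"
proof
  assume "e \<in> delivered_del ms D"
  then obtain j' where "j' \<in> D" "j' < length ms" "msg_at ms j' = DelMsg e"
    by (auto simp: delivered_del_def)
  then have "e \<in> delivered_ins ms (deps_at ms j')"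
    using log_okD(2)[OF ok, of j'] by simp
  with closed \<open>j' \<in> D\<close> obtain j'' where "j'' \<in> D" "inserts_at ms j'' e"
    by (auto simp: delivered_ins_def)
  with log_okD(1)[OF ok] ins \<open>j \<notin> D\<close> show False
    unfolding unique_inserts_def by blast
qed

lemma replica_ok_deliver:
  assumes ok: "log_ok ms" and rep: "replica_ok r ms D st"
    and j: "j < length ms" "j \<notin> D" "deps_at ms j \<subseteq> D"
  shows "replica_ok r ms (insert j D) (apply_msg (msg_at ms j) st)"
proof (cases "msg_at ms j")
  case (InsMsg e x p s)
  then have ins: "inserts_at ms j e' \<longleftrightarrow> e' = e" for e'
    using j by (auto simp: inserts_at_def)
  have "log_tree ms e = Some (p, s)"
    using log_tree_inserts_at[OF log_okD(1)[OF ok] j(1) InsMsg] .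
  then have "msg_node (msg_at ms j) (skeleton st) = log_tree ms |` delivered_ins ms (insert j D)"
    using InsMsg by (simp add: replica_ok_skeleton[OF rep] delivered_ins_insert ins restrict_map_insert)
  then have "skeleton (apply_msg (msg_at ms j) st) = log_tree ms |` delivered_ins ms (insert j D)"
    by (simp only: skeleton_apply_msg)
  moreover have "e \<notin> delivered_del ms D"
    using not_deleted_before_inserted[OF ok _ _ j(2)] rep ins by (simp add: replica_ok_def)
  moreover have "delivered_del ms (insert j D) = delivered_del ms D"
    using InsMsg by (simp add: delivered_del_insert)
  ultimately show ?thesis
    using rep j InsMsg by (auto simp: replica_ok_def visible_def)
next
  case (DelMsg e)
  then have "delivered_ins ms (insert j D) = delivered_ins ms D"
    by (auto simp: delivered_ins_insert inserts_at_def)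
  moreover have "delivered_del ms (insert j D) = insert e (delivered_del ms D)"
    using DelMsg j(1) by (auto simp: delivered_del_insert)
  moreover have "skeleton (apply_msg (msg_at ms j) st) = skeleton st"
    using DelMsg by (simp only: skeleton_apply_msg msg_node.simps)
  ultimately show ?thesis
    using rep j DelMsg by (auto simp: replica_ok_def visible_def split: option.splits)
qed

section \<open>Reachable configurations\<close>

definition config_ok :: "('r::linorder, 'v) config \<Rightarrow> bool" where
  "config_ok c \<longleftrightarrow> log_ok (msgs c) \<and> (\<forall>r. replica_ok r (msgs c) (dlv c r) (reps c r))"

lemma config_ok_init: "config_ok init"
  by (simp add: config_ok_def init_def log_ok_def replica_ok_def unique_inserts_def inserts_at_def
      log_tree_def rooted_def root_children_right_def skeleton_def delivered_ins_def fun_eq_iff)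

lemma config_ok_broadcast:
  assumes ok: "config_ok c" and log: "log_ok (msgs c @ [(r, m, dlv c r)])"
    and rep: "replica_ok r (msgs c) (dlv c r) st"
    and fresh: "\<forall>e x p s. m = InsMsg e x p s \<longrightarrow> fst e = r \<and> snd e < ctr st"
  shows "config_ok (broadcast c r st m)"
proof -
  let ?ms = "msgs c @ [(r, m, dlv c r)]"
  have uniq: "unique_inserts ?ms"
    using log by (rule log_okD)
  have "replica_ok r ?ms (dlv c r) st"
    using rep uniq fresh by (intro replica_ok_snoc) auto
  then have "replica_ok r ?ms (insert (length (msgs c)) (dlv c r)) (apply_msg m st)"
    using replica_ok_deliver[OF log, of r "dlv c r" st "length (msgs c)"] rep
    by (auto simp: replica_ok_def)
  moreover have "replica_ok r' ?ms (dlv c r') (reps c r')" if "r' \<noteq> r" for r'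
    using ok uniq fresh that by (intro replica_ok_snoc) (auto simp: config_ok_def)
  ultimately show ?thesis
    using log by (auto simp: config_ok_def broadcast_def)
qed

lemma config_ok_deliver:
  assumes ok: "config_ok c" and step: "step c (Deliver r j) = Some c'"
  shows "config_ok c'"
proof -
  have j: "j < length (msgs c)" "j \<notin> dlv c r" "deps_at (msgs c) j \<subseteq> dlv c r"
    and c': "c' = c\<lparr>reps := (reps c)(r := apply_msg (msg_at (msgs c) j) (reps c r)),
                    dlv := (dlv c)(r := insert j (dlv c r))\<rparr>"
    using step by (auto split: if_splits)
  have "replica_ok r (msgs c) (insert j (dlv c r)) (apply_msg (msg_at (msgs c) j) (reps c r))"
    using ok j by (intro replica_ok_deliver) (auto simp: config_ok_def)
  with ok show ?thesis
    by (simp add: config_ok_def c')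
qed

lemma gen_insert_InsMsg: "\<exists>p s. gen_insert st r i x = InsMsg (new_id st r) x p s"
  by (simp add: gen_insert_def Let_def)

lemma insert_step_placed:
  fixes c :: "('r::linorder, 'v) config" and r :: 'r
  defines "st \<equiv> reps c r"
  assumes ok: "config_ok c" and step: "step c (Invoke r (Insert i x)) = Some c'"
  obtains p s P where
    "c' = broadcast c r (st\<lparr>ctr := Suc (ctr st)\<rparr>) (InsMsg (new_id st r) x p s)"
    "i \<le> length (elems st)" "root_path (skeleton st) p P" "p = None \<longrightarrow> s = R"
    "placed_after (skeleton st) (if i = 0 then None else Some (elems st ! (i - 1)))
       (P @ [(side_rank s, new_id st r), (1, new_id st r)])"
proof -
  have log: "log_ok (msgs c)" and rep: "replica_ok r (msgs c) (dlv c r) st"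
    using ok by (simp_all add: config_ok_def st_def)
  have i: "i \<le> length (elems st)"
    and c': "c' = broadcast c r (st\<lparr>ctr := Suc (ctr st)\<rparr>) (gen_insert st r i x)"
    using step by (auto simp: st_def Let_def split: if_splits)
  obtain p s where m: "gen_insert st r i x = InsMsg (new_id st r) x p s"
    using gen_insert_InsMsg[of st r i x] by blast
  show thesis
    using gen_insert_placed[OF replica_ok_finite[OF rep] replica_ok_rooted[OF log rep]
        replica_ok_root_children_right[OF log rep] i m] that c' m i
    by auto
qed

lemma config_ok_insert:
  assumes ok: "config_ok c" and step: "step c (Invoke r (Insert i x)) = Some c'"
  shows "config_ok c'"
proof -
  let ?st = "reps c r" and ?D = "dlv c r"
  have log: "log_ok (msgs c)" and rep: "replica_ok r (msgs c) ?D ?st"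
    using ok by (simp_all add: config_ok_def)
  obtain p s P where c': "c' = broadcast c r (?st\<lparr>ctr := Suc (ctr ?st)\<rparr>) (InsMsg (new_id ?st r) x p s)"
    and P: "root_path (skeleton ?st) p P" and root: "p = None \<longrightarrow> s = R"
    using insert_step_placed[OF ok step] by blast
  have "q \<in> delivered_ins (msgs c) ?D" if "p = Some q" for q
    using P that root_path_SomeD[of "skeleton ?st" q P] replica_ok_dom[OF rep] by simp
  then have "msg_causal (msgs c) ?D (InsMsg (new_id ?st r) x p s)"
    by simp
  moreover have "new_id ?st r \<notin> dom (log_tree (msgs c))"
    using rep by (rule replica_ok_new_id)
  ultimately have "log_ok (msgs c @ [(r, InsMsg (new_id ?st r) x p s, ?D)])"
    using log_ok_snoc[OF log] root by blast
  then show ?thesis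
    unfolding c' by (rule config_ok_broadcast[OF ok _ replica_ok_tick[OF rep]]) (simp add: new_id_def)
qed

lemma insert_step_log_tree:
  fixes c :: "('r::linorder, 'v) config" and r :: 'r
  defines "st \<equiv> reps c r"
  assumes ok: "config_ok c" and step: "step c (Invoke r (Insert i x)) = Some c'"
    and c': "c' = broadcast c r (st\<lparr>ctr := Suc (ctr st)\<rparr>) (InsMsg (new_id st r) x p s)"
  shows "log_tree (msgs c') (new_id st r) = Some (p, s)" "skeleton st \<subseteq>\<^sub>m log_tree (msgs c')"
proof -
  have msgs': "msgs c' = msgs c @ [(r, InsMsg (new_id st r) x p s, dlv c r)]"
    by (simp add: c' broadcast_def)
  have uniq: "unique_inserts (msgs c')"
    using config_ok_insert[OF ok step] by (simp add: config_ok_def log_ok_def)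
  then show "log_tree (msgs c') (new_id st r) = Some (p, s)"
    by (intro log_tree_inserts_at[of _ "length (msgs c)"]) (simp_all add: msgs')
  have "replica_ok r (msgs c) (dlv c r) st"
    using ok by (simp add: config_ok_def st_def)
  then have "skeleton st \<subseteq>\<^sub>m log_tree (msgs c)"
    by (rule replica_ok_skeleton_le)
  also have "\<dots> \<subseteq>\<^sub>m log_tree (msgs c')"
    using uniq unfolding msgs' by (rule log_tree_prefix)
  finally show "skeleton st \<subseteq>\<^sub>m log_tree (msgs c')" .
qed

lemma config_ok_delete:
  assumes ok: "config_ok c" and step: "step c (Invoke r (Delete i)) = Some c'"
  shows "config_ok c'"
proof -
  let ?st = "reps c r" and ?D = "dlv c r"
  have log: "log_ok (msgs c)" and rep: "replica_ok r (msgs c) ?D ?st"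
    using ok by (simp_all add: config_ok_def)
  have i: "i < length (elems ?st)" and c': "c' = broadcast c r ?st (DelMsg (elems ?st ! i))"
    using step by (auto simp: Let_def gen_delete_def split: if_splits)
  have "elems ?st ! i \<in> delivered_ins (msgs c) ?D"
    using elems_nth_in_dom[OF replica_ok_finite[OF rep] replica_ok_rooted[OF log rep] i]
      replica_ok_dom[OF rep] by simp
  then have "log_ok (msgs c @ [(r, DelMsg (elems ?st ! i), ?D)])"
    by (intro log_ok_snoc[OF log]) simp_all
  then show ?thesis
    unfolding c' by (rule config_ok_broadcast[OF ok _ rep]) simp
qed

lemma config_ok_step: "config_ok c \<Longrightarrow> step c ev = Some c' \<Longrightarrow> config_ok c'"
proof (cases ev)
  case (Invoke r op)
  then show "config_ok c \<Longrightarrow> step c ev = Some c' \<Longrightarrow> config_ok c'"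
    by (cases op) (auto intro: config_ok_insert config_ok_delete)
qed (auto intro: config_ok_deliver)

section \<open>Executions and the total order\<close>

lemma fold_step_None: "fold (\<lambda>e co. Option.bind co (\<lambda>c. step c e)) es None = None"
  by (induction es) auto

lemma run_take_state_at:
  assumes "valid_exec es" "k \<le> length es"
  shows "run (take k es) = Some (state_at es k)"
proof -
  have "run es = fold (\<lambda>e co. Option.bind co (\<lambda>c. step c e)) (drop k es) (run (take k es))"
    unfolding run_def by (metis append_take_drop_id fold_append comp_apply)
  with assms(1) have "run (take k es) \<noteq> None"
    unfolding valid_exec_def by (metis fold_step_None)
  then show ?thesis
    by (auto simp: state_at_def)
qed

lemma step_state_at:
  assumes "valid_exec es" "k < length es"
  shows "step (state_at es k) (es ! k) = Some (state_at es (Suc k))"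
proof -
  have "run (take (Suc k) es) = Option.bind (run (take k es)) (\<lambda>c. step c (es ! k))"
    using assms(2) by (simp add: run_def take_Suc_conv_app_nth)
  with assms show ?thesis
    by (simp add: run_take_state_at)
qed

lemma config_ok_state_at: "valid_exec es \<Longrightarrow> k \<le> length es \<Longrightarrow> config_ok (state_at es k)"
proof (induction k)
  case 0
  then show ?case
    by (simp add: state_at_def run_def config_ok_init)
next
  case (Suc k)
  then show ?case
    using step_state_at config_ok_step by (metis Suc_le_lessD less_imp_le_nat)
qed

lemma step_msgs_append: "step c ev = Some c' \<Longrightarrow> \<exists>ys. msgs c' = msgs c @ ys"
  by (cases "(c, ev)" rule: step.cases) (auto simp: Let_def broadcast_def split: if_splits)

lemma msgs_state_at_append:
  assumes "valid_exec es" "k \<le> n" "n \<le> length es"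
  shows "\<exists>ys. msgs (state_at es n) = msgs (state_at es k) @ ys"
  using assms(2,3)
proof (induction n)
  case (Suc n)
  show ?case
  proof (cases "k = Suc n")
    case False
    with Suc obtain ys where "msgs (state_at es n) = msgs (state_at es k) @ ys"
      by auto
    moreover obtain zs where "msgs (state_at es (Suc n)) = msgs (state_at es n) @ zs"
      using step_msgs_append step_state_at[OF assms(1)] Suc.prems(2) by (metis Suc_le_lessD)
    ultimately show ?thesis by auto
  qed simp
qed simp

lemma log_tree_state_at_le:
  assumes "valid_exec es" "k \<le> length es"
  shows "log_tree (msgs (state_at es k)) \<subseteq>\<^sub>m log_tree (msgs (state_at es (length es)))"
proof -
  obtain ys where ys: "msgs (state_at es (length es)) = msgs (state_at es k) @ ys"
    using msgs_state_at_append[OF assms(1,2)] by blast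
  have "log_ok (msgs (state_at es (length es)))"
    using config_ok_state_at[OF assms(1)] by (simp add: config_ok_def)
  then show ?thesis
    unfolding ys by (intro log_tree_prefix log_okD)
qed

lemma elems_sorted_tree_order:
  assumes ok: "config_ok c" and le: "log_tree (msgs c) \<subseteq>\<^sub>m G"
  shows "sorted_wrt (\<lambda>a b. (a, b) \<in> tree_order G) (elems (reps c r))"
proof -
  let ?st = "reps c r"
  have log: "log_ok (msgs c)" and rep: "replica_ok r (msgs c) (dlv c r) ?st"
    using ok by (simp_all add: config_ok_def)
  have fin: "finite (dom (tree ?st))" and rooted: "rooted (skeleton ?st)"
    using replica_ok_finite[OF rep] replica_ok_rooted[OF log rep] .
  have "skeleton ?st \<subseteq>\<^sub>m G"
    using replica_ok_skeleton_le[OF rep] le by (rule map_le_trans)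
  moreover have "set (elems ?st) \<subseteq> dom (skeleton ?st)"
    using set_elems_subset_dom[OF fin rooted] by simp
  ultimately show ?thesis
    using tree_less_in_tree_order[OF _ rooted]
    by (intro sorted_wrt_mono_rel[OF _ elems_sorted[OF fin]]) blast
qed

lemma set_elems_eq_received:
  assumes ok: "config_ok c"
  shows "set (elems (reps c r)) = received_ins c r - received_del c r"
proof -
  let ?st = "reps c r"
  have log: "log_ok (msgs c)" and rep: "replica_ok r (msgs c) (dlv c r) ?st"
    using ok by (simp_all add: config_ok_def)
  have "set (traversal ?st) = delivered_ins (msgs c) (dlv c r)"
    using set_traversal[OF replica_ok_finite[OF rep] replica_ok_rooted[OF log rep]] replica_ok_dom[OF rep]
    by simp
  moreover have "received_ins c r = delivered_ins (msgs c) (dlv c r)"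
    "received_del c r = delivered_del (msgs c) (dlv c r)"
    by (auto simp: received_ins_def received_del_def delivered_ins_def delivered_del_def inserts_at_def)
  ultimately show ?thesis
    using rep replica_ok_dom[OF rep] by (auto simp: elems_def replica_ok_def)
qed

lemma insert_tree_order:
  assumes ok: "config_ok c" and step: "step c (Invoke r (Insert i x)) = Some c'"
    and le: "log_tree (msgs c') \<subseteq>\<^sub>m G"
  defines "st \<equiv> reps c r"
  shows "(\<forall>j<i. (elems st ! j, new_id st r) \<in> tree_order G) \<and>
    (\<forall>j. i \<le> j \<and> j < length (elems st) \<longrightarrow> (new_id st r, elems st ! j) \<in> tree_order G)"
proof -
  let ?e = "new_id st r" and ?g = "skeleton st"
  have log: "log_ok (msgs c)" and rep: "replica_ok r (msgs c) (dlv c r) st"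
    using ok by (simp_all add: config_ok_def st_def)
  have fin: "finite (dom (tree st))" and rooted: "rooted ?g"
    using replica_ok_finite[OF rep] replica_ok_rooted[OF log rep] .
  obtain p s P where c': "c' = broadcast c r (st\<lparr>ctr := Suc (ctr st)\<rparr>) (InsMsg ?e x p s)"
    and i: "i \<le> length (elems st)" and P: "root_path ?g p P"
    and placed: "placed_after ?g (if i = 0 then None else Some (elems st ! (i - 1)))
                   (P @ [(side_rank s, ?e), (1, ?e)])"
    using insert_step_placed[OF ok step] unfolding st_def by blast
  have Ge: "G ?e = Some (p, s)"
    using map_le_SomeD[OF le insert_step_log_tree(1)[OF ok step c'[unfolded st_def]]]
    by (simp add: st_def)
  have "?g \<subseteq>\<^sub>m G"
    using map_le_trans[OF insert_step_log_tree(2)[OF ok step c'[unfolded st_def]] le]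
    by (simp add: st_def)
  then have key_e: "key G ?e = P @ [(side_rank s, ?e), (1, ?e)]"
    using key_child[of G ?e p s P] Ge root_path_mono[OF P] by blast
  have elem: "elems st ! j \<in> dom G \<and> key G (elems st ! j) = key ?g (elems st ! j)"
    if "j < length (elems st)" for j
    using rooted_key_mono[OF \<open>?g \<subseteq>\<^sub>m G\<close> rooted] elems_nth_in_dom[OF fin rooted that] by simp
  have e_dom: "?e \<in> dom G"
    using Ge by blast
  show ?thesis
  proof (intro conjI allI impI)
    fix j
    assume "j < i"
    with i elem[of j] e_dom key_e placed_after_elems[OF fin rooted i placed]
    show "(elems st ! j, ?e) \<in> tree_order G"
      by (simp add: tree_order_def tree_less_def)
  next
    fix j
    assume "i \<le> j \<and> j < length (elems st)"
    with elem[of j] e_dom key_e placed_after_elems[OF fin rooted i placed]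
    show "(?e, elems st ! j) \<in> tree_order G"
      by (simp add: tree_order_def tree_less_def)
  qed
qed

theorem theorem1:
  fixes es :: "('r::linorder, 'v) event list"
  assumes "valid_exec es"
  shows "\<exists>Rel :: ('r nid \<times> 'r nid) set.
    strict_linear_order_on (inserted (state_at es (length es))) Rel \<and>
    (\<forall>k \<le> length es. \<forall>r.
       sorted_wrt (\<lambda>a b. (a, b) \<in> Rel) (elems (reps (state_at es k) r)) \<and>
       set (elems (reps (state_at es k) r)) =
         received_ins (state_at es k) r - received_del (state_at es k) r) \<and>
    (\<forall>k < length es. \<forall>r i x. es ! k = Invoke r (Insert i x) \<longrightarrow>
       (let st = reps (state_at es k) r; as = elems st; e = new_id st r in
         (\<forall>j < i. (as ! j, e) \<in> Rel) \<and>
         (\<forall>j. i \<le> j \<and> j < length as \<longrightarrow> (e, as ! j) \<in> Rel)))"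
proof -
  define G where "G = log_tree (msgs (state_at es (length es)))"
  have ok: "config_ok (state_at es k)" if "k \<le> length es" for k
    using config_ok_state_at[OF assms that] .
  have "inserted (state_at es (length es)) = dom G"
    by (simp add: G_def inserted_def dom_log_tree inserts_at_def)
  with ok[of "length es"] have "strict_linear_order_on (inserted (state_at es (length es))) (tree_order G)"
    by (simp add: G_def config_ok_def log_ok_def strict_linear_order_on_tree_order)
  moreover have "\<forall>k \<le> length es. \<forall>r.
      sorted_wrt (\<lambda>a b. (a, b) \<in> tree_order G) (elems (reps (state_at es k) r)) \<and>
      set (elems (reps (state_at es k) r)) = received_ins (state_at es k) r - received_del (state_at es k) r"
    using ok elems_sorted_tree_order log_tree_state_at_le[OF assms] set_elems_eq_received
    unfolding G_def by blast
  moreover have "let st = reps (state_at es k) r; as = elems st; e = new_id st r in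
      (\<forall>j < i. (as ! j, e) \<in> tree_order G) \<and>
      (\<forall>j. i \<le> j \<and> j < length as \<longrightarrow> (e, as ! j) \<in> tree_order G)"
    if k: "k < length es" and ins: "es ! k = Invoke r (Insert i x)" for k r i x
  proof -
    have "step (state_at es k) (Invoke r (Insert i x)) = Some (state_at es (Suc k))"
      using step_state_at[OF assms k] ins by simp
    with k show ?thesis
      using insert_tree_order[OF ok] log_tree_state_at_le[OF assms, of "Suc k"]
      by (simp add: G_def Let_def)
  qed
  ultimately show ?thesis
    by blast
qed

end
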